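(* Let $\theta\in[0,2\pi)$ and $\alpha_2,\alpha_3\in\mathbb C$. Put $\gamma_\to=e^{i(\theta+\sqrt2\Lambda+3\pi/4)}$, $\gamma_\leftarrow=e^{i(-\theta+\sqrt2\Lambda+3\pi/4)}$, $$D_\gamma=\{\psi_0+c_L(L_++\gamma_\to R_-)+c_R(R_++\gamma_\leftarrow L_-):\psi_0\in D(H_0),\ c_L,c_R\in\mathbb C\},$$ $$D_\alpha=\{\psi\in D(H_0^* ):\psi(\Lambda)=\alpha_2\psi'(-\Lambda)\ \text{and}\ \psi'(\Lambda)=\alpha_3\psi(-\Lambda)\}.$$ Then $D_\gamma=D_\alpha$ if and only if $\alpha_2=-e^{i\theta}$ and $\alpha_3=e^{i\theta}$.
   Context: Fix $\Lambda>0$, $\Omega_\Lambda=(-\infty,-\Lambda)\cup(\Lambda,\infty)$. $D(H_0^* )$ is the set of $\psi\in L^2(\Omega_\Lambda)$ such that $\psi,\psi'$ are locally absolutely continuous on each closed half-line $(-\infty,-\Lambda]$, $[\Lambda,\infty)$ and $\psi''$ is square integrable; $\psi(\pm\Lambda),\psi'(\pm\Lambda)$ are one-sided boundary values. $D(H_0)=\{\psi\in D(H_0^* ):\psi(\pm\Lambda)=\psi'(\pm\Lambda)=0\}$ (the domain of the closure of $-\frac{d^2}{dx^2}$ on $C_0^\infty(\Omega_\Lambda)$). Let $N=2^{1/4}e^{\Lambda/\sqrt2}$ and define on $\Omega_\Lambda$: $R_\pm(x)=0$ for $x<-\Lambda$, $R_\pm(x)=Ne^{(-1\pm i)x/\sqrt2}$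 for $x>\Lambda$; $L_\pm(x)=Ne^{(1\mp i)x/\sqrt2}$ for $x<-\Lambda$, $L_\pm(x)=0$ for $x>\Lambda$. *)

theory Defs
  imports "HOL-Analysis.Analysis"
begin

definition abs_cont_on :: "real \<Rightarrow> real \<Rightarrow> (real \<Rightarrow> complex) \<Rightarrow> bool" where
  "abs_cont_on a b f \<longleftrightarrow>
     (\<forall>\<epsilon>>0. \<exists>\<delta>>0. \<forall>(n::nat) (u::nat \<Rightarrow> real) (v::nat \<Rightarrow> real).
        (\<forall>k<n. a \<le> u k \<and> u k \<le> v k \<and> v k \<le> b) \<and>
        (\<forall>j<n. \<forall>k<n. j \<noteq> k \<longrightarrow> v j \<le> u k \<or> v k \<le> u j) \<and>
        (\<Sum>k<n. v k - u k) < \<delta>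
        \<longrightarrow> (\<Sum>k<n. cmod (f (v k) - f (u k))) < \<epsilon>)"

definition loc_abs_cont_on :: "real set \<Rightarrow> (real \<Rightarrow> complex) \<Rightarrow> bool" where
  "loc_abs_cont_on I f \<longleftrightarrow> (\<forall>a\<in>I. \<forall>b\<in>I. a \<le> b \<longrightarrow> abs_cont_on a b f)"

definition L2_on :: "real set \<Rightarrow> (real \<Rightarrow> complex) \<Rightarrow> bool" where
  "L2_on S f \<longleftrightarrow> f \<in> borel_measurable (lebesgue_on S) \<and>
                  integrable (lebesgue_on S) (\<lambda>x. (cmod (f x))^2)"

definition Omega :: "real \<Rightarrow> real set" where
  "Omega \<Lambda> = {..<-\<Lambda>} \<union> {\<Lambda><..}"

definition halflines :: "real \<Rightarrow> real set set" where
  "halflines \<Lambda> = {{..-\<Lambda>}, {\<Lambda>..}}"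

definition dv :: "real set \<Rightarrow> (real \<Rightarrow> complex) \<Rightarrow> real \<Rightarrow> complex" where
  "dv I \<psi> x = vector_derivative \<psi> (at x within I)"

text \<open>Functions on \<Omega>_\<Lambda> are represented as functions real => complex which vanish on the
  open gap (-\<Lambda>,\<Lambda>); their values at \<plusminus>\<Lambda> are the one-sided boundary values.\<close>
definition DH0star :: "real \<Rightarrow> (real \<Rightarrow> complex) set" where
  "DH0star \<Lambda> = {\<psi>. (\<forall>x. -\<Lambda> < x \<and> x < \<Lambda> \<longrightarrow> \<psi> x = 0) \<and> L2_on (Omega \<Lambda>) \<psi> \<and>
     (\<forall>I\<in>halflines \<Lambda>.
        loc_abs_cont_on I \<psi> \<and>
        (\<forall>x\<in>I. \<psi> differentiable (at x within I)) \<and>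
        loc_abs_cont_on I (dv I \<psi>) \<and>
        (\<exists>g. L2_on I g \<and>
             (AE x in lebesgue. x \<in> I \<longrightarrow> (dv I \<psi> has_vector_derivative g x) (at x within I))))}"

definition dm :: "real \<Rightarrow> (real \<Rightarrow> complex) \<Rightarrow> complex" where
  "dm \<Lambda> \<psi> = dv {..-\<Lambda>} \<psi> (-\<Lambda>)"

definition dp :: "real \<Rightarrow> (real \<Rightarrow> complex) \<Rightarrow> complex" where
  "dp \<Lambda> \<psi> = dv {\<Lambda>..} \<psi> \<Lambda>"

definition DH0 :: "real \<Rightarrow> (real \<Rightarrow> complex) set" where
  "DH0 \<Lambda> = {\<psi>\<in>DH0star \<Lambda>. \<psi> (-\<Lambda>) = 0 \<and> \<psi> \<Lambda> = 0 \<and> dm \<Lambda> \<psi> = 0 \<and> dp \<Lambda> \<psi> = 0}"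

definition Nc :: "real \<Rightarrow> real" where
  "Nc \<Lambda> = 2 powr (1/4) * exp (\<Lambda> / sqrt 2)"

definition Rp :: "real \<Rightarrow> real \<Rightarrow> complex" where
  "Rp \<Lambda> x = (if \<Lambda> \<le> x then of_real (Nc \<Lambda>) * exp ((-1 + \<i>) * of_real (x / sqrt 2)) else 0)"
definition Rm :: "real \<Rightarrow> real \<Rightarrow> complex" where
  "Rm \<Lambda> x = (if \<Lambda> \<le> x then of_real (Nc \<Lambda>) * exp ((-1 - \<i>) * of_real (x / sqrt 2)) else 0)"
definition Lp :: "real \<Rightarrow> real \<Rightarrow> complex" where
  "Lp \<Lambda> x = (if x \<le> -\<Lambda> then of_real (Nc \<Lambda>) * exp ((1 - \<i>) * of_real (x / sqrt 2)) else 0)"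
definition Lm :: "real \<Rightarrow> real \<Rightarrow> complex" where
  "Lm \<Lambda> x = (if x \<le> -\<Lambda> then of_real (Nc \<Lambda>) * exp ((1 + \<i>) * of_real (x / sqrt 2)) else 0)"

definition gamma_r :: "real \<Rightarrow> real \<Rightarrow> complex" where
  "gamma_r \<Lambda> \<theta> = exp (\<i> * of_real (\<theta> + sqrt 2 * \<Lambda> + 3 * pi / 4))"
definition gamma_l :: "real \<Rightarrow> real \<Rightarrow> complex" where
  "gamma_l \<Lambda> \<theta> = exp (\<i> * of_real (- \<theta> + sqrt 2 * \<Lambda> + 3 * pi / 4))"

definition Dgamma :: "real \<Rightarrow> real \<Rightarrow> (real \<Rightarrow> complex) set" where
  "Dgamma \<Lambda> \<theta> = {\<lambda>x. \<psi>0 x + cL * (Lp \<Lambda> x + gamma_r \<Lambda> \<theta> * Rm \<Lambda> x)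
                          + cR * (Rp \<Lambda> x + gamma_l \<Lambda> \<theta> * Lm \<Lambda> x)
                   | \<psi>0 cL cR. \<psi>0 \<in> DH0 \<Lambda>}"

definition Dalpha :: "real \<Rightarrow> complex \<Rightarrow> complex \<Rightarrow> (real \<Rightarrow> complex) set" where
  "Dalpha \<Lambda> a2 a3 = {\<psi>\<in>DH0star \<Lambda>. \<psi> \<Lambda> = a2 * dm \<Lambda> \<psi> \<and> dp \<Lambda> \<psi> = a3 * \<psi> (-\<Lambda>)}"

end

theory Submission
  imports Defs
begin

text \<open>
  Both D_gamma and D_alpha lie in D(H_0^*), which is a vector space on which the
  boundary data psi(-Lambda), psi'(-Lambda), psi(Lambda), psi'(Lambda) are linear; D(H_0) is
  the subspace where all four vanish.  The functions R_+-, L_+- are decaying exponentials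
  supported on one half-line, so their boundary data are explicit.  Writing T = e^{i theta}
  and omega = e^{3 pi i/4}, one checks that the two generators L_+ + gamma_r R_- and
  R_+ + gamma_l L_- of D_gamma satisfy psi(Lambda) = -T psi'(-Lambda) and
  psi'(Lambda) = T psi(-Lambda), and that their left boundary data are linearly independent.
  Hence D_gamma = D_alpha for alpha_2 = -T, alpha_3 = T: any psi in that D_alpha minus the
  combination of generators with the same left data has all boundary data zero.  Conversely
  the first generator has nonzero psi(-Lambda) and psi'(-Lambda), which pins down alpha_2, alpha_3.
\<close>

definition ac_family :: "real \<Rightarrow> real \<Rightarrow> nat \<Rightarrow> (nat \<Rightarrow> real) \<Rightarrow> (nat \<Rightarrow> real) \<Rightarrow> bool" where
  "ac_family a b n u v \<longleftrightarrow>
     (\<forall>k<n. a \<le> u k \<and> u k \<le> v k \<and> v k \<le> b) \<and>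
     (\<forall>j<n. \<forall>k<n. j \<noteq> k \<longrightarrow> v j \<le> u k \<or> v k \<le> u j)"

definition variation_sum :: "(real \<Rightarrow> complex) \<Rightarrow> nat \<Rightarrow> (nat \<Rightarrow> real) \<Rightarrow> (nat \<Rightarrow> real) \<Rightarrow> real" where
  "variation_sum f n u v = (\<Sum>k<n. cmod (f (v k) - f (u k)))"

lemma abs_cont_on_iff:
  "abs_cont_on a b f \<longleftrightarrow>
     (\<forall>\<epsilon>>0. \<exists>\<delta>>0. \<forall>n u v. ac_family a b n u v \<and> (\<Sum>k<n. v k - u k) < \<delta>
                          \<longrightarrow> variation_sum f n u v < \<epsilon>)"
  unfolding abs_cont_on_def ac_family_def variation_sum_def by simp

lemma abs_cont_on_cong:
  assumes "\<And>x. a \<le> x \<Longrightarrow> x \<le> b \<Longrightarrow> f x = g x" and "abs_cont_on a b g"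
  shows "abs_cont_on a b f"
proof -
  have "variation_sum f n u v = variation_sum g n u v" if "ac_family a b n u v" for n u v
    using that assms(1) unfolding ac_family_def variation_sum_def by (intro sum.cong) auto
  then show ?thesis using assms(2) unfolding abs_cont_on_iff by metis
qed

lemma abs_cont_on_lipschitz:
  assumes "\<And>x y. a \<le> x \<Longrightarrow> x \<le> b \<Longrightarrow> a \<le> y \<Longrightarrow> y \<le> b \<Longrightarrow> cmod (f x - f y) \<le> B * \<bar>x - y\<bar>"
  shows "abs_cont_on a b f"
  unfolding abs_cont_on_iff
proof (intro allI impI)
  fix \<epsilon> :: real assume "\<epsilon> > 0"
  define \<delta> where "\<delta> = \<epsilon> / (\<bar>B\<bar> + 1)"
  have "\<delta> > 0" using \<open>\<epsilon> > 0\<close> by (simp add: \<delta>_def add_pos_nonneg)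
  have small: "\<bar>B\<bar> * \<delta> < \<epsilon>"
    using \<open>\<epsilon> > 0\<close> by (simp add: \<delta>_def field_simps)
  have "variation_sum f n u v < \<epsilon>" if fam: "ac_family a b n u v" and len: "(\<Sum>k<n. v k - u k) < \<delta>" for n u v
  proof -
    have "variation_sum f n u v \<le> (\<Sum>k<n. \<bar>B\<bar> * (v k - u k))"
      unfolding variation_sum_def
    proof (intro sum_mono)
      fix k assume "k \<in> {..<n}"
      then have "a \<le> u k" "u k \<le> v k" "v k \<le> b" using fam by (auto simp: ac_family_def)
      then have "cmod (f (v k) - f (u k)) \<le> B * \<bar>v k - u k\<bar>" by (intro assms) auto
      also have "\<dots> \<le> \<bar>B\<bar> * (v k - u k)" using \<open>u k \<le> v k\<close> by (simp add: mult_right_mono)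
      finally show "cmod (f (v k) - f (u k)) \<le> \<bar>B\<bar> * (v k - u k)" .
    qed
    also have "\<dots> = \<bar>B\<bar> * (\<Sum>k<n. v k - u k)" by (simp add: sum_distrib_left)
    also have "\<dots> \<le> \<bar>B\<bar> * \<delta>" using len by (intro mult_left_mono) auto
    finally show ?thesis using small by linarith
  qed
  then show "\<exists>\<delta>>0. \<forall>n u v. ac_family a b n u v \<and> (\<Sum>k<n. v k - u k) < \<delta> \<longrightarrow> variation_sum f n u v < \<epsilon>"
    using \<open>\<delta> > 0\<close> by blast
qed

lemma abs_cont_on_add:
  assumes "abs_cont_on a b f" and "abs_cont_on a b g"
  shows "abs_cont_on a b (\<lambda>x. f x + g x)"
  unfolding abs_cont_on_iff
proof (intro allI impI)
  fix \<epsilon> :: real assume "\<epsilon> > 0"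
  then have "\<epsilon>/2 > 0" by simp
  obtain d1 where "d1 > 0" and d1: "\<forall>n u v. ac_family a b n u v \<and> (\<Sum>k<n. v k - u k) < d1
                                     \<longrightarrow> variation_sum f n u v < \<epsilon>/2"
    using assms(1) \<open>\<epsilon>/2 > 0\<close> unfolding abs_cont_on_iff by blast
  obtain d2 where "d2 > 0" and d2: "\<forall>n u v. ac_family a b n u v \<and> (\<Sum>k<n. v k - u k) < d2
                                     \<longrightarrow> variation_sum g n u v < \<epsilon>/2"
    using assms(2) \<open>\<epsilon>/2 > 0\<close> unfolding abs_cont_on_iff by blast
  have "variation_sum (\<lambda>x. f x + g x) n u v < \<epsilon>"
    if "ac_family a b n u v" "(\<Sum>k<n. v k - u k) < min d1 d2" for n u v
  proof -
    have "variation_sum (\<lambda>x. f x + g x) n u v \<le> variation_sum f n u v + variation_sum g n u v"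
      unfolding variation_sum_def sum.distrib[symmetric]
      by (intro sum_mono) (metis add_diff_add norm_triangle_ineq)
    also have "\<dots> < \<epsilon>/2 + \<epsilon>/2" using that d1 d2 by (intro add_strict_mono) simp_all
    finally show ?thesis by simp
  qed
  then show "\<exists>\<delta>>0. \<forall>n u v. ac_family a b n u v \<and> (\<Sum>k<n. v k - u k) < \<delta>
               \<longrightarrow> variation_sum (\<lambda>x. f x + g x) n u v < \<epsilon>"
    using \<open>d1 > 0\<close> \<open>d2 > 0\<close> by (intro exI[of _ "min d1 d2"]) auto
qed

lemma abs_cont_on_cmult:
  assumes "abs_cont_on a b f"
  shows "abs_cont_on a b (\<lambda>x. c * f x)"
  unfolding abs_cont_on_iff
proof (intro allI impI)
  fix \<epsilon> :: real assume "\<epsilon> > 0"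
  have "cmod c + 1 > 0" by (intro add_nonneg_pos) auto
  with \<open>\<epsilon> > 0\<close> have "\<epsilon> / (cmod c + 1) > 0" by simp
  then obtain \<delta> where "\<delta> > 0" and d: "\<forall>n u v. ac_family a b n u v \<and> (\<Sum>k<n. v k - u k) < \<delta>
                                         \<longrightarrow> variation_sum f n u v < \<epsilon> / (cmod c + 1)"
    using assms unfolding abs_cont_on_iff by blast
  have "variation_sum (\<lambda>x. c * f x) n u v < \<epsilon>"
    if "ac_family a b n u v" "(\<Sum>k<n. v k - u k) < \<delta>" for n u v
  proof -
    have "variation_sum (\<lambda>x. c * f x) n u v = cmod c * variation_sum f n u v"
      by (simp add: variation_sum_def sum_distrib_left norm_mult right_diff_distrib[symmetric])
    also have "\<dots> \<le> cmod c * (\<epsilon> / (cmod c + 1))" using d that by (intro mult_left_mono) (auto intro: less_imp_le)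
    also have "\<dots> < \<epsilon>" using \<open>\<epsilon> > 0\<close> \<open>cmod c + 1 > 0\<close> by (simp add: field_simps)
    finally show ?thesis .
  qed
  then show "\<exists>\<delta>>0. \<forall>n u v. ac_family a b n u v \<and> (\<Sum>k<n. v k - u k) < \<delta>
               \<longrightarrow> variation_sum (\<lambda>x. c * f x) n u v < \<epsilon>"
    using \<open>\<delta> > 0\<close> by blast
qed

definition closed_halfline :: "real set \<Rightarrow> bool" where
  "closed_halfline I \<longleftrightarrow> (\<exists>a. I = {..a} \<or> I = {a..})"

lemma closed_halfline_atMost [simp]: "closed_halfline {..a}"
  and closed_halfline_atLeast [simp]: "closed_halfline {a..}"
  unfolding closed_halfline_def by auto

lemma closed_halfline_interval:
  "closed_halfline I \<Longrightarrow> a \<in> I \<Longrightarrow> b \<in> I \<Longrightarrow> a \<le> x \<Longrightarrow> x \<le> b \<Longrightarrow> x \<in> I"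
  unfolding closed_halfline_def by auto

text \<open>Every point of a closed half-line is a limit point of it, so one-sided derivatives
  are unique.\<close>

lemma closed_halfline_within_nontrivial:
  assumes "closed_halfline I" and "x \<in> I"
  shows "at x within I \<noteq> bot"
proof -
  obtain a where a: "I = {..a} \<or> I = {a..}" using assms(1) closed_halfline_def by auto
  have "\<exists>y\<in>I. y \<noteq> x \<and> \<bar>y - x\<bar> < e" if "e > 0" for e
    using a
  proof
    assume "I = {..a}" then show ?thesis using that assms(2) by (intro bexI[of _ "x - e/2"]) auto
  next
    assume "I = {a..}" then show ?thesis using that assms(2) by (intro bexI[of _ "x + e/2"]) auto
  qed
  then have "x islimpt I" unfolding islimpt_approachable_real by blast
  then show ?thesis by (simp add: trivial_limit_within)
qed

lemma dv_eqI:
  assumes "closed_halfline I" "x \<in> I" "(f has_vector_derivative f') (at x within I)"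
  shows "dv I f x = f'"
  unfolding dv_def by (rule vector_derivative_within[OF closed_halfline_within_nontrivial]) (use assms in auto)

lemma loc_abs_cont_on_lincomb:
  assumes "loc_abs_cont_on I f" "loc_abs_cont_on I g"
  shows "loc_abs_cont_on I (\<lambda>x. a * f x + b * g x)"
  using assms unfolding loc_abs_cont_on_def by (auto intro!: abs_cont_on_add abs_cont_on_cmult)

lemma loc_abs_cont_on_cong:
  assumes "closed_halfline I" "\<And>x. x \<in> I \<Longrightarrow> f x = g x" "loc_abs_cont_on I g"
  shows "loc_abs_cont_on I f"
  unfolding loc_abs_cont_on_def
proof (intro ballI impI)
  fix a b assume ab: "a \<in> I" "b \<in> I" "a \<le> b"
  then have "\<And>x. a \<le> x \<Longrightarrow> x \<le> b \<Longrightarrow> f x = g x"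
    using assms(1,2) closed_halfline_interval by blast
  then show "abs_cont_on a b f"
    using ab assms(3) abs_cont_on_cong unfolding loc_abs_cont_on_def by blast
qed

lemma L2_onI:
  fixes f :: "real \<Rightarrow> complex"
  assumes "f \<in> borel_measurable lebesgue" "S \<in> sets lebesgue" "integrable lebesgue h"
    and bound: "\<And>x. x \<in> S \<Longrightarrow> cmod (f x)^2 \<le> h x"
  shows "L2_on S f"
  unfolding L2_on_def
proof
  show "f \<in> borel_measurable (lebesgue_on S)" using assms(1) by (rule measurable_restrict_space1)
  have "integrable lebesgue (\<lambda>x. indicator S x *\<^sub>R (cmod (f x))^2)"
  proof (rule Bochner_Integration.integrable_bound[OF assms(3)])
    show "(\<lambda>x. indicator S x *\<^sub>R (cmod (f x))^2) \<in> borel_measurable lebesgue"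
      using assms(1,2) by measurable
    show "AE x in lebesgue. norm (indicator S x *\<^sub>R (cmod (f x))^2) \<le> norm (h x)"
      using bound by (intro AE_I2) (auto simp: indicator_def intro: order_trans[OF _ abs_ge_self])
  qed
  then show "integrable (lebesgue_on S) (\<lambda>x. (cmod (f x))^2)"
    using assms(2) by (subst integrable_restrict_space) auto
qed

text \<open>Square integrable functions form a vector space: |a f + b g|^2 <= 2|a f|^2 + 2|b g|^2.\<close>

lemma L2_on_lincomb:
  assumes "L2_on S f" "L2_on S g"
  shows "L2_on S (\<lambda>x. a * f x + b * g x)"
  unfolding L2_on_def
proof
  have m: "f \<in> borel_measurable (lebesgue_on S)" "g \<in> borel_measurable (lebesgue_on S)"
    using assms unfolding L2_on_def by auto
  then show "(\<lambda>x. a * f x + b * g x) \<in> borel_measurable (lebesgue_on S)" by measurable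
  let ?h = "\<lambda>x. 2 * (cmod a)^2 * (cmod (f x))^2 + 2 * (cmod b)^2 * (cmod (g x))^2"
  have "integrable (lebesgue_on S) ?h" using assms unfolding L2_on_def by auto
  then show "integrable (lebesgue_on S) (\<lambda>x. (cmod (a * f x + b * g x))^2)"
  proof (rule Bochner_Integration.integrable_bound)
    show "(\<lambda>x. (cmod (a * f x + b * g x))^2) \<in> borel_measurable (lebesgue_on S)" using m by measurable
    have "(cmod (a * f x + b * g x))^2 \<le> ?h x" for x
    proof -
      have "cmod (a * f x + b * g x) \<le> cmod a * cmod (f x) + cmod b * cmod (g x)"
        by (metis norm_mult norm_triangle_ineq)
      then have "(cmod (a * f x + b * g x))^2 \<le> (cmod a * cmod (f x) + cmod b * cmod (g x))^2"
        by (intro power_mono) auto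
      also have "\<dots> \<le> ?h x"
        using sum_squares_ge_zero[of "cmod a * cmod (f x) - cmod b * cmod (g x)" 0]
        by (simp add: power2_eq_square algebra_simps)
      finally show ?thesis .
    qed
    then show "AE x in lebesgue_on S. norm ((cmod (a * f x + b * g x))^2) \<le> norm (?h x)"
      by (intro AE_I2) auto
  qed
qed

lemma has_vector_derivative_lincomb:
  fixes f g :: "real \<Rightarrow> complex"
  assumes "(f has_vector_derivative f') F" "(g has_vector_derivative g') F"
  shows "((\<lambda>x. a * f x + b * g x) has_vector_derivative a * f' + b * g') F"
  using assms by (intro has_vector_derivative_add has_vector_derivative_mult_right)

lemma dv_lincomb:
  assumes "closed_halfline I" "x \<in> I"
    and "f differentiable (at x within I)" "g differentiable (at x within I)"
  shows "dv I (\<lambda>x. a * f x + b * g x) x = a * dv I f x + b * dv I g x"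
  using assms(3,4) unfolding vector_derivative_works
  by (intro dv_eqI[OF assms(1,2)]) (simp add: dv_def has_vector_derivative_lincomb)

definition H2_on :: "real set \<Rightarrow> (real \<Rightarrow> complex) \<Rightarrow> bool" where
  "H2_on I \<psi> \<longleftrightarrow> loc_abs_cont_on I \<psi> \<and>
      (\<forall>x\<in>I. \<psi> differentiable (at x within I)) \<and>
      loc_abs_cont_on I (dv I \<psi>) \<and>
      (\<exists>g. L2_on I g \<and> (AE x in lebesgue. x \<in> I \<longrightarrow> (dv I \<psi> has_vector_derivative g x) (at x within I)))"

lemma H2_on_lincomb:
  assumes I: "closed_halfline I" and "H2_on I f" "H2_on I g"
  shows "H2_on I (\<lambda>x. a * f x + b * g x)"
proof -
  obtain f'' g'' where f'': "L2_on I f''" "AE x in lebesgue. x \<in> I \<longrightarrow> (dv I f has_vector_derivative f'' x) (at x within I)"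
    and g'': "L2_on I g''" "AE x in lebesgue. x \<in> I \<longrightarrow> (dv I g has_vector_derivative g'' x) (at x within I)"
    using assms(2,3) H2_on_def by auto
  have diff: "\<forall>x\<in>I. f differentiable (at x within I) \<and> g differentiable (at x within I)"
    using assms(2,3) H2_on_def by auto
  have dv_eq: "\<And>x. x \<in> I \<Longrightarrow> dv I (\<lambda>x. a * f x + b * g x) x = a * dv I f x + b * dv I g x"
    using dv_lincomb[OF I] diff by blast
  show ?thesis unfolding H2_on_def
  proof (intro conjI ballI exI[of _ "\<lambda>x. a * f'' x + b * g'' x"])
    show "loc_abs_cont_on I (\<lambda>x. a * f x + b * g x)"
      using assms(2,3) by (simp add: H2_on_def loc_abs_cont_on_lincomb)
    show "(\<lambda>x. a * f x + b * g x) differentiable (at x within I)" if "x \<in> I" for x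
    proof -
      have "(f has_vector_derivative dv I f x) (at x within I)" "(g has_vector_derivative dv I g x) (at x within I)"
        using diff that unfolding dv_def vector_derivative_works[symmetric] by auto
      then show ?thesis by (rule differentiableI_vector[OF has_vector_derivative_lincomb])
    qed
    show "loc_abs_cont_on I (dv I (\<lambda>x. a * f x + b * g x))"
      using assms(2,3) by (intro loc_abs_cont_on_cong[OF I dv_eq]) (simp_all add: H2_on_def loc_abs_cont_on_lincomb)
    show "L2_on I (\<lambda>x. a * f'' x + b * g'' x)" using f'' g'' by (simp add: L2_on_lincomb)
    show "AE x in lebesgue. x \<in> I \<longrightarrow>
            (dv I (\<lambda>x. a * f x + b * g x) has_vector_derivative a * f'' x + b * g'' x) (at x within I)"
      using f''(2) g''(2)
    proof eventually_elim
      case (elim x)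
      show ?case
      proof
        assume x: "x \<in> I"
        with elim have deriv: "((\<lambda>y. a * dv I f y + b * dv I g y) has_vector_derivative a * f'' x + b * g'' x) (at x within I)"
          by (intro has_vector_derivative_lincomb) auto
        show "(dv I (\<lambda>x. a * f x + b * g x) has_vector_derivative a * f'' x + b * g'' x) (at x within I)"
          by (rule has_vector_derivative_transform[OF x dv_eq deriv])
      qed
    qed
  qed
qed

lemma DH0star_iff:
  "\<psi> \<in> DH0star \<Lambda> \<longleftrightarrow> (\<forall>x. -\<Lambda> < x \<and> x < \<Lambda> \<longrightarrow> \<psi> x = 0) \<and> L2_on (Omega \<Lambda>) \<psi> \<and>
                        H2_on {..-\<Lambda>} \<psi> \<and> H2_on {\<Lambda>..} \<psi>"
  by (simp add: DH0star_def halflines_def H2_on_def)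

lemma DH0star_lincomb:
  assumes "f \<in> DH0star \<Lambda>" "g \<in> DH0star \<Lambda>"
  shows "(\<lambda>x. a * f x + b * g x) \<in> DH0star \<Lambda>"
    and "dm \<Lambda> (\<lambda>x. a * f x + b * g x) = a * dm \<Lambda> f + b * dm \<Lambda> g"
    and "dp \<Lambda> (\<lambda>x. a * f x + b * g x) = a * dp \<Lambda> f + b * dp \<Lambda> g"
proof -
  show "(\<lambda>x. a * f x + b * g x) \<in> DH0star \<Lambda>"
    using assms unfolding DH0star_iff by (simp add: L2_on_lincomb H2_on_lincomb)
  have "H2_on {..-\<Lambda>} f" "H2_on {..-\<Lambda>} g" "H2_on {\<Lambda>..} f" "H2_on {\<Lambda>..} g"
    using assms unfolding DH0star_iff by auto
  then show "dm \<Lambda> (\<lambda>x. a * f x + b * g x) = a * dm \<Lambda> f + b * dm \<Lambda> g"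
    and "dp \<Lambda> (\<lambda>x. a * f x + b * g x) = a * dp \<Lambda> f + b * dp \<Lambda> g"
    unfolding dm_def dp_def H2_on_def by (simp_all add: dv_lincomb)
qed

lemma DH0_subset_Dalpha: "DH0 \<Lambda> \<subseteq> Dalpha \<Lambda> a2 a3"
  unfolding DH0_def Dalpha_def by auto

lemma Dalpha_lincomb:
  assumes "f \<in> Dalpha \<Lambda> a2 a3" "g \<in> Dalpha \<Lambda> a2 a3"
  shows "(\<lambda>x. a * f x + b * g x) \<in> Dalpha \<Lambda> a2 a3"
  using assms DH0star_lincomb[of f \<Lambda> g a b] unfolding Dalpha_def by (auto simp: algebra_simps)

lemma Dalpha_parameters_unique:
  assumes "\<phi> \<in> Dalpha \<Lambda> a2 a3" "\<phi> \<in> Dalpha \<Lambda> b2 b3" "dm \<Lambda> \<phi> \<noteq> 0" "\<phi> (-\<Lambda>) \<noteq> 0"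
  shows "a2 = b2 \<and> a3 = b3"
  using assms unfolding Dalpha_def by auto

text \<open>Subtracting the
  combination with the same left data leaves a function whose right data vanish too, by the
  boundary conditions.\<close>

lemma Dalpha_decompose:
  assumes \<psi>: "\<psi> \<in> Dalpha \<Lambda> a2 a3" and \<phi>1: "\<phi>1 \<in> Dalpha \<Lambda> a2 a3" and \<phi>2: "\<phi>2 \<in> Dalpha \<Lambda> a2 a3"
    and det: "\<phi>1 (-\<Lambda>) * dm \<Lambda> \<phi>2 - \<phi>2 (-\<Lambda>) * dm \<Lambda> \<phi>1 \<noteq> 0"
  obtains \<psi>0 c1 c2 where "\<psi>0 \<in> DH0 \<Lambda>" "\<psi> = (\<lambda>x. \<psi>0 x + c1 * \<phi>1 x + c2 * \<phi>2 x)"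
proof -
  define D where "D = \<phi>1 (-\<Lambda>) * dm \<Lambda> \<phi>2 - \<phi>2 (-\<Lambda>) * dm \<Lambda> \<phi>1"
  define c1 where "c1 = (\<psi> (-\<Lambda>) * dm \<Lambda> \<phi>2 - \<phi>2 (-\<Lambda>) * dm \<Lambda> \<psi>) / D"
  define c2 where "c2 = (\<phi>1 (-\<Lambda>) * dm \<Lambda> \<psi> - \<psi> (-\<Lambda>) * dm \<Lambda> \<phi>1) / D"
  define \<Phi> where "\<Phi> = (\<lambda>x. c1 * \<phi>1 x + c2 * \<phi>2 x)"
  define \<psi>0 where "\<psi>0 = (\<lambda>x. 1 * \<psi> x + (-1) * \<Phi> x)"
  have D: "D \<noteq> 0" using det by (simp add: D_def)
  have \<Phi>: "\<Phi> \<in> Dalpha \<Lambda> a2 a3" unfolding \<Phi>_def using \<phi>1 \<phi>2 by (rule Dalpha_lincomb)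
  then have \<psi>0: "\<psi>0 \<in> Dalpha \<Lambda> a2 a3" unfolding \<psi>0_def using \<psi> by (intro Dalpha_lincomb)
  have c1D: "c1 * D = \<psi> (-\<Lambda>) * dm \<Lambda> \<phi>2 - \<phi>2 (-\<Lambda>) * dm \<Lambda> \<psi>" using D by (simp add: c1_def)
  have c2D: "c2 * D = \<phi>1 (-\<Lambda>) * dm \<Lambda> \<psi> - \<psi> (-\<Lambda>) * dm \<Lambda> \<phi>1" using D by (simp add: c2_def)
  have match_value: "\<Phi> (-\<Lambda>) = \<psi> (-\<Lambda>)"
  proof -
    have "\<Phi> (-\<Lambda>) * D = (c1 * D) * \<phi>1 (-\<Lambda>) + (c2 * D) * \<phi>2 (-\<Lambda>)"
      by (simp add: \<Phi>_def algebra_simps)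
    also have "\<dots> = \<psi> (-\<Lambda>) * D" unfolding c1D c2D unfolding D_def by (simp add: algebra_simps)
    finally show ?thesis using D by simp
  qed
  have match_slope: "dm \<Lambda> \<Phi> = dm \<Lambda> \<psi>"
  proof -
    have "dm \<Lambda> \<Phi> * D = (c1 * D) * dm \<Lambda> \<phi>1 + (c2 * D) * dm \<Lambda> \<phi>2"
      using \<phi>1 \<phi>2 unfolding \<Phi>_def Dalpha_def by (simp add: DH0star_lincomb algebra_simps)
    also have "\<dots> = dm \<Lambda> \<psi> * D" unfolding c1D c2D unfolding D_def by (simp add: algebra_simps)
    finally show ?thesis using D by simp
  qed
  have "dm \<Lambda> \<psi>0 = 1 * dm \<Lambda> \<psi> + (-1) * dm \<Lambda> \<Phi>"
    unfolding \<psi>0_def using \<psi> \<Phi> unfolding Dalpha_def by (intro DH0star_lincomb(2)) auto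
  then have "\<psi>0 (-\<Lambda>) = 0" "dm \<Lambda> \<psi>0 = 0"
    using match_value match_slope by (simp_all add: \<psi>0_def)
  with \<psi>0 have "\<psi>0 \<in> DH0 \<Lambda>" unfolding Dalpha_def DH0_def by simp
  moreover have "\<psi> = (\<lambda>x. \<psi>0 x + c1 * \<phi>1 x + c2 * \<phi>2 x)" by (simp add: \<psi>0_def \<Phi>_def)
  ultimately show ?thesis by (rule that)
qed

lemma exp_has_vector_derivative:
  fixes c k :: complex
  shows "((\<lambda>x::real. c * exp (k * of_real x)) has_vector_derivative c * k * exp (k * of_real x)) (at x within S)"
proof -
  have "((\<lambda>z. c * exp (k * z)) has_field_derivative c * k * exp (k * of_real x)) (at (of_real x))"
    by (auto intro!: derivative_eq_intros)
  from has_vector_derivative_real_field[OF this] show ?thesis .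
qed

lemma exp_lipschitz:
  fixes c k :: complex
  assumes "x \<in> {a..b}" "y \<in> {a..b}"
  shows "cmod (c * exp (k * of_real x) - c * exp (k * of_real y))
           \<le> (cmod c * cmod k * exp (\<bar>Re k\<bar> * (\<bar>a\<bar> + \<bar>b\<bar>))) * \<bar>x - y\<bar>"
proof -
  let ?B = "cmod c * cmod k * exp (\<bar>Re k\<bar> * (\<bar>a\<bar> + \<bar>b\<bar>))"
  have bound: "onorm (\<lambda>h. h *\<^sub>R (c * k * exp (k * of_real z))) \<le> ?B" if z: "z \<in> {a..b}" for z
  proof -
    have "Re k * z \<le> \<bar>Re k\<bar> * \<bar>z\<bar>" by (metis abs_ge_self abs_mult)
    also have "\<dots> \<le> \<bar>Re k\<bar> * (\<bar>a\<bar> + \<bar>b\<bar>)" using z by (intro mult_left_mono) auto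
    finally have "cmod c * cmod k * exp (Re k * z) \<le> ?B" by (intro mult_left_mono) auto
    then show ?thesis
      by (simp add: onorm_scaleR_left[OF bounded_linear_ident] onorm_id norm_mult)
  qed
  have "norm ((\<lambda>x. c * exp (k * of_real x)) x - (\<lambda>x. c * exp (k * of_real x)) y) \<le> ?B * norm (x - y)"
    using exp_has_vector_derivative[unfolded has_vector_derivative_def] bound assms
    by (intro differentiable_bound[where S="{a..b}"]) auto
  then show ?thesis by simp
qed

lemma exp_abs_cont_on:
  fixes c k :: complex
  shows "abs_cont_on a b (\<lambda>x. c * exp (k * of_real x))"
  by (rule abs_cont_on_lipschitz) (rule exp_lipschitz; simp)

definition decaying_on :: "real set \<Rightarrow> complex \<Rightarrow> bool" where
  "decaying_on I k \<longleftrightarrow> (\<exists>a. I = {a..} \<and> Re k < 0 \<or> I = {..a} \<and> 0 < Re k)"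

lemma decaying_on_closed_halfline: "decaying_on I k \<Longrightarrow> closed_halfline I"
  unfolding decaying_on_def closed_halfline_def by auto

lemma closed_halfline_decaying:
  assumes "closed_halfline I"
  obtains k where "decaying_on I k"
proof -
  obtain a where "I = {..a} \<or> I = {a..}" using assms closed_halfline_def by auto
  then have "decaying_on I 1 \<or> decaying_on I (-1)" unfolding decaying_on_def by auto
  then show ?thesis using that by blast
qed

lemma exp_square_integrable:
  assumes "decaying_on I k"
  shows "integrable lebesgue (\<lambda>x. indicator I x * exp (2 * Re k * x))"
proof -
  obtain a where "I = {a..} \<and> Re k < 0 \<or> I = {..a} \<and> 0 < Re k"
    using assms decaying_on_def by auto
  then show ?thesis
  proof
    assume I: "I = {a..} \<and> Re k < 0"
    then have "(\<lambda>x. exp (- (-2 * Re k) * x)) integrable_on {a..}"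
      by (intro integrable_on_exp_minus_to_infinity) auto
    then have "set_integrable lebesgue {a..} (\<lambda>x. exp (- (-2 * Re k) * x))"
      by (intro nonnegative_absolutely_integrable_1) auto
    then show ?thesis using I by (simp add: set_integrable_def)
  next
    assume I: "I = {..a} \<and> 0 < Re k"
    then have "(\<lambda>x. exp (- (2 * Re k) * x)) integrable_on {-a..}"
      by (intro integrable_on_exp_minus_to_infinity) auto
    then have "set_integrable lebesgue {-a..} (\<lambda>x. exp (- (2 * Re k) * x))"
      by (intro nonnegative_absolutely_integrable_1) auto
    then have "integrable lebesgue (\<lambda>x. indicator I (0 + (-1) * x) * exp (2 * Re k * (0 + (-1) * x)))"
      using I by (simp add: set_integrable_def indicator_def minus_le_iff)
    then show ?thesis
      using lebesgue_integrable_real_affine_iff[of "-1" "\<lambda>x. indicator I x * exp (2 * Re k * x)" 0] by simp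
  qed
qed

lemma norm_exp_square:
  fixes c k :: complex
  shows "(cmod (c * exp (k * of_real x)))^2 = (cmod c)^2 * exp (2 * Re k * x)"
  by (simp add: norm_mult power_mult_distrib power2_eq_square exp_add[symmetric])

lemma closed_halfline_lebesgue: "closed_halfline I \<Longrightarrow> I \<in> sets lebesgue"
  unfolding closed_halfline_def by auto

lemma L2_on_exp:
  fixes c :: complex
  assumes "decaying_on I k"
  shows "L2_on I (\<lambda>x. c * exp (k * of_real x))"
proof (rule L2_onI)
  have "continuous_on UNIV (\<lambda>x::real. c * exp (k * of_real x))" by (intro continuous_intros)
  then show "(\<lambda>x. c * exp (k * of_real x)) \<in> borel_measurable lebesgue"
    by (intro measurable_completion) (simp add: borel_measurable_continuous_onI)
  show "I \<in> sets lebesgue" using assms by (intro closed_halfline_lebesgue decaying_on_closed_halfline)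
  show "integrable lebesgue (\<lambda>x. (cmod c)^2 * (indicator I x * exp (2 * Re k * x)))"
    using assms by (intro integrable_mult_right exp_square_integrable)
  show "(cmod (c * exp (k * of_real x)))^2 \<le> (cmod c)^2 * (indicator I x * exp (2 * Re k * x))"
    if "x \<in> I" for x using that by (simp add: norm_exp_square)
qed

lemma dv_exp:
  fixes c k :: complex
  assumes "closed_halfline I" and eq: "\<And>x. x \<in> I \<Longrightarrow> \<psi> x = c * exp (k * of_real x)" and x: "x \<in> I"
  shows "dv I \<psi> x = c * k * exp (k * of_real x)"
  by (rule dv_eqI[OF assms(1) x has_vector_derivative_transform[OF x eq exp_has_vector_derivative]])

lemma H2_on_exp:
  fixes c k :: complex
  assumes dec: "decaying_on I k" and eq: "\<And>x. x \<in> I \<Longrightarrow> \<psi> x = c * exp (k * of_real x)"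
  shows "H2_on I \<psi>"
  unfolding H2_on_def
proof (intro conjI ballI exI[of _ "\<lambda>x. (c * k) * k * exp (k * of_real x)"])
  have I: "closed_halfline I" using dec by (rule decaying_on_closed_halfline)
  have dv: "\<And>x. x \<in> I \<Longrightarrow> dv I \<psi> x = (c * k) * exp (k * of_real x)"
    using dv_exp[OF I eq] by simp
  show "loc_abs_cont_on I \<psi>"
    by (rule loc_abs_cont_on_cong[OF I eq]) (use exp_abs_cont_on in \<open>auto simp: loc_abs_cont_on_def\<close>)
  show "\<psi> differentiable (at x within I)" if "x \<in> I" for x
    by (rule differentiableI_vector[OF has_vector_derivative_transform[OF that eq exp_has_vector_derivative]])
  show "loc_abs_cont_on I (dv I \<psi>)"
    by (rule loc_abs_cont_on_cong[OF I dv]) (use exp_abs_cont_on in \<open>auto simp: loc_abs_cont_on_def\<close>)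
  show "L2_on I (\<lambda>x. (c * k) * k * exp (k * of_real x))" using dec by (rule L2_on_exp)
  show "AE x in lebesgue. x \<in> I \<longrightarrow> (dv I \<psi> has_vector_derivative (c * k) * k * exp (k * of_real x)) (at x within I)"
    by (intro AE_I2 impI has_vector_derivative_transform[OF _ dv exp_has_vector_derivative])
qed

text \<open>A function vanishing on a closed half-line is regular there with zero derivative
  (write 0 as 0 times any decaying exponential).\<close>

lemma vanishing_on_closed_halfline:
  assumes I: "closed_halfline I" and zero: "\<And>x. x \<in> I \<Longrightarrow> \<psi> x = 0"
  shows "H2_on I \<psi>" and "x \<in> I \<Longrightarrow> dv I \<psi> x = 0"
proof -
  obtain k where dec: "decaying_on I k" using I closed_halfline_decaying by blast
  have eq: "\<And>x. x \<in> I \<Longrightarrow> \<psi> x = 0 * exp (k * of_real x)" using zero by simp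
  show "H2_on I \<psi>" by (rule H2_on_exp[OF dec eq])
  show "x \<in> I \<Longrightarrow> dv I \<psi> x = 0" using dv_exp[OF I eq] by simp
qed

definition exp_piece :: "real set \<Rightarrow> complex \<Rightarrow> complex \<Rightarrow> real \<Rightarrow> complex" where
  "exp_piece I c k x = (if x \<in> I then c * exp (k * of_real x) else 0)"

lemma halflines_cases:
  assumes "I \<in> halflines \<Lambda>" "J \<in> halflines \<Lambda>" "\<Lambda> > 0"
  shows "closed_halfline J" and "-\<Lambda> < x \<Longrightarrow> x < \<Lambda> \<Longrightarrow> x \<notin> I" and "x \<in> J \<Longrightarrow> J \<noteq> I \<Longrightarrow> x \<notin> I"
  using assms unfolding halflines_def by auto

lemma exp_piece_DH0star:
  assumes \<Lambda>: "\<Lambda> > 0" and I: "I \<in> halflines \<Lambda>" and dec: "decaying_on I k"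
  shows "exp_piece I c k \<in> DH0star \<Lambda>"
proof -
  have H2: "H2_on J (exp_piece I c k)" if J: "J \<in> halflines \<Lambda>" for J
  proof (cases "J = I")
    case True
    then show ?thesis using dec by (intro H2_on_exp) (auto simp: exp_piece_def)
  next
    case False
    then show ?thesis
      using halflines_cases[OF I J \<Lambda>] by (intro vanishing_on_closed_halfline) (auto simp: exp_piece_def)
  qed
  have "L2_on (Omega \<Lambda>) (exp_piece I c k)"
  proof (rule L2_onI)
    have "exp_piece I c k = (\<lambda>x. indicator I x *\<^sub>R (c * exp (k * of_real x)))"
      by (auto simp: exp_piece_def fun_eq_iff)
    also have "\<dots> \<in> borel_measurable lebesgue"
    proof -
      have "continuous_on I (\<lambda>x::real. c * exp (k * of_real x))" by (intro continuous_intros)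
      moreover have "I \<in> sets borel" using I by (auto simp: halflines_def)
      ultimately show ?thesis
        by (intro measurable_completion) (simp add: borel_measurable_continuous_on_indicator)
    qed
    finally show "exp_piece I c k \<in> borel_measurable lebesgue" .
    show "Omega \<Lambda> \<in> sets lebesgue" by (simp add: Omega_def)
    show "integrable lebesgue (\<lambda>x. (cmod c)^2 * (indicator I x * exp (2 * Re k * x)))"
      using dec by (intro integrable_mult_right exp_square_integrable)
    show "(cmod (exp_piece I c k x))^2 \<le> (cmod c)^2 * (indicator I x * exp (2 * Re k * x))" for x
      by (simp add: exp_piece_def norm_exp_square)
  qed
  then show ?thesis
    unfolding DH0star_iff using H2 halflines_cases(2)[OF I I \<Lambda>]
    by (auto simp: exp_piece_def halflines_def)
qed

lemma exp_piece_dv: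
  assumes "\<Lambda> > 0" "I \<in> halflines \<Lambda>" "J \<in> halflines \<Lambda>" "x \<in> J"
  shows "dv J (exp_piece I c k) x = (if J = I then c * k * exp (k * of_real x) else 0)"
proof (cases "J = I")
  case True
  then show ?thesis
    using halflines_cases(1)[OF assms(2,3,1)] assms(4) by (simp add: dv_exp exp_piece_def)
next
  case False
  then show ?thesis
    using halflines_cases[OF assms(2,3,1)] assms(4)
    by (simp add: vanishing_on_closed_halfline(2) exp_piece_def)
qed

text \<open>Boundary data of right- and left-supported exponentials; for the left one the
  exponent is written as -k so that both have amplitude c e^{k Lambda} at the boundary.\<close>

lemma exp_piece_right:
  assumes "\<Lambda> > 0" "Re k < 0"
  shows "exp_piece {\<Lambda>..} c k \<in> DH0star \<Lambda>"
    and "exp_piece {\<Lambda>..} c k \<Lambda> = c * exp (k * of_real \<Lambda>)"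
    and "exp_piece {\<Lambda>..} c k (-\<Lambda>) = 0"
    and "dp \<Lambda> (exp_piece {\<Lambda>..} c k) = k * (c * exp (k * of_real \<Lambda>))"
    and "dm \<Lambda> (exp_piece {\<Lambda>..} c k) = 0"
proof -
  have I: "{\<Lambda>..} \<in> halflines \<Lambda>" "{..-\<Lambda>} \<in> halflines \<Lambda>" "{..-\<Lambda>} \<noteq> {\<Lambda>..}"
    using assms(1) by (auto simp: halflines_def)
  show "exp_piece {\<Lambda>..} c k \<in> DH0star \<Lambda>"
    using assms by (intro exp_piece_DH0star I) (auto simp: decaying_on_def)
  show "exp_piece {\<Lambda>..} c k \<Lambda> = c * exp (k * of_real \<Lambda>)" "exp_piece {\<Lambda>..} c k (-\<Lambda>) = 0"
    using assms(1) by (simp_all add: exp_piece_def)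
  show "dp \<Lambda> (exp_piece {\<Lambda>..} c k) = k * (c * exp (k * of_real \<Lambda>))"
    "dm \<Lambda> (exp_piece {\<Lambda>..} c k) = 0"
    unfolding dp_def dm_def using exp_piece_dv[OF assms(1) I(1)] I by simp_all
qed

lemma exp_piece_left:
  assumes "\<Lambda> > 0" "Re k < 0"
  shows "exp_piece {..-\<Lambda>} c (-k) \<in> DH0star \<Lambda>"
    and "exp_piece {..-\<Lambda>} c (-k) (-\<Lambda>) = c * exp (k * of_real \<Lambda>)"
    and "exp_piece {..-\<Lambda>} c (-k) \<Lambda> = 0"
    and "dm \<Lambda> (exp_piece {..-\<Lambda>} c (-k)) = - k * (c * exp (k * of_real \<Lambda>))"
    and "dp \<Lambda> (exp_piece {..-\<Lambda>} c (-k)) = 0"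
proof -
  have I: "{..-\<Lambda>} \<in> halflines \<Lambda>" "{\<Lambda>..} \<in> halflines \<Lambda>" "{\<Lambda>..} \<noteq> {..-\<Lambda>}"
    using assms(1) by (auto simp: halflines_def)
  show "exp_piece {..-\<Lambda>} c (-k) \<in> DH0star \<Lambda>"
    using assms by (intro exp_piece_DH0star I) (auto simp: decaying_on_def)
  show "exp_piece {..-\<Lambda>} c (-k) (-\<Lambda>) = c * exp (k * of_real \<Lambda>)" "exp_piece {..-\<Lambda>} c (-k) \<Lambda> = 0"
    using assms(1) by (simp_all add: exp_piece_def)
  show "dm \<Lambda> (exp_piece {..-\<Lambda>} c (-k)) = - k * (c * exp (k * of_real \<Lambda>))"
    "dp \<Lambda> (exp_piece {..-\<Lambda>} c (-k)) = 0"
    unfolding dp_def dm_def using exp_piece_dv[OF assms(1) I(1)] I by simp_all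
qed

text \<open>omega = e^{3 pi i/4} = (-1 + i)/sqrt 2.  Its inverse is (-1 - i)/sqrt 2, so the exponents of
  R_+, R_-, L_+, L_- are omega, 1/omega, -omega, -1/omega (times x), all decaying.\<close>

definition omega :: complex where
  "omega = exp (\<i> * of_real (3 * pi / 4))"

lemma omega_eq: "omega = (-1 + \<i>) / of_real (sqrt 2)"
proof -
  have "omega = cis (pi - pi / 4)" by (simp add: omega_def cis_conv_exp)
  also have "\<dots> = Complex (- (sqrt 2 / 2)) (sqrt 2 / 2)"
    by (simp only: cis.ctr cos_pi_minus sin_pi_minus cos_45 sin_45)
  also have "\<dots> = (-1 + \<i>) / of_real (sqrt 2)"
    by (simp add: complex_eq_iff real_div_sqrt)
  finally show ?thesis .
qed

lemma omega_inverse: "inverse omega = (-1 - \<i>) / of_real (sqrt 2)"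
proof (rule inverse_unique)
  have "(-1 + \<i>) * (-1 - \<i>) = (2 :: complex)" by (simp add: algebra_simps)
  then show "omega * ((-1 - \<i>) / of_real (sqrt 2)) = 1"
    by (simp add: omega_eq flip: of_real_mult)
qed

lemma omega_nonzero: "omega \<noteq> 0"
  by (simp add: omega_def)

lemma omega_square_neq_one: "omega^2 \<noteq> 1"
proof -
  have "omega^2 = - \<i>" by (simp add: omega_eq power2_eq_square algebra_simps flip: of_real_mult)
  then show ?thesis by (simp add: complex_eq_iff)
qed

lemma Re_omega: "Re omega < 0" and Re_omega_inverse: "Re (inverse omega) < 0"
  unfolding omega_inverse by (simp_all add: omega_eq)

lemma omega_minus_inverse: "omega - inverse omega = \<i> * of_real (sqrt 2)"
  by (simp add: omega_eq omega_inverse field_simps flip: of_real_mult)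

lemma waves_as_exp_pieces:
  "Rp \<Lambda> = exp_piece {\<Lambda>..} (of_real (Nc \<Lambda>)) omega"
  "Rm \<Lambda> = exp_piece {\<Lambda>..} (of_real (Nc \<Lambda>)) (inverse omega)"
  "Lp \<Lambda> = exp_piece {..-\<Lambda>} (of_real (Nc \<Lambda>)) (- omega)"
  "Lm \<Lambda> = exp_piece {..-\<Lambda>} (of_real (Nc \<Lambda>)) (- inverse omega)"
proof -
  have "- omega = (1 - \<i>) / of_real (sqrt 2)" "- inverse omega = (1 + \<i>) / of_real (sqrt 2)"
    unfolding omega_inverse unfolding omega_eq minus_divide_left by simp_all
  then show "Rp \<Lambda> = exp_piece {\<Lambda>..} (of_real (Nc \<Lambda>)) omega"
    "Rm \<Lambda> = exp_piece {\<Lambda>..} (of_real (Nc \<Lambda>)) (inverse omega)"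
    "Lp \<Lambda> = exp_piece {..-\<Lambda>} (of_real (Nc \<Lambda>)) (- omega)"
    "Lm \<Lambda> = exp_piece {..-\<Lambda>} (of_real (Nc \<Lambda>)) (- inverse omega)"
    unfolding omega_inverse unfolding omega_eq
    by (simp_all add: fun_eq_iff Rp_def Rm_def Lp_def Lm_def exp_piece_def mult_ac)
qed

definition amp :: "real \<Rightarrow> complex \<Rightarrow> complex" where
  "amp \<Lambda> k = of_real (Nc \<Lambda>) * exp (k * of_real \<Lambda>)"

lemma amp_nonzero: "amp \<Lambda> k \<noteq> 0"
  by (simp add: amp_def Nc_def)

lemma amp_ratio: "amp \<Lambda> omega / amp \<Lambda> (inverse omega) = exp (\<i> * of_real (sqrt 2 * \<Lambda>))"
proof -
  have "amp \<Lambda> omega / amp \<Lambda> (inverse omega) = exp ((omega - inverse omega) * of_real \<Lambda>)"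
    by (simp add: amp_def Nc_def left_diff_distrib exp_diff)
  then show ?thesis by (simp add: omega_minus_inverse mult.assoc)
qed

lemma gamma_r_eq: "gamma_r \<Lambda> \<theta> = exp (\<i> * of_real \<theta>) * omega * (amp \<Lambda> omega / amp \<Lambda> (inverse omega))"
proof -
  have "\<i> * of_real (\<theta> + sqrt 2 * \<Lambda> + 3 * pi / 4)
          = \<i> * of_real \<theta> + \<i> * of_real (3 * pi / 4) + \<i> * of_real (sqrt 2 * \<Lambda>)"
    by (simp add: algebra_simps)
  then show ?thesis by (simp only: gamma_r_def exp_add omega_def[symmetric] amp_ratio)
qed

lemma gamma_l_eq: "gamma_l \<Lambda> \<theta> = omega * (amp \<Lambda> omega / amp \<Lambda> (inverse omega)) / exp (\<i> * of_real \<theta>)"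
proof -
  have "\<i> * of_real (- \<theta> + sqrt 2 * \<Lambda> + 3 * pi / 4)
          = \<i> * of_real (3 * pi / 4) + \<i> * of_real (sqrt 2 * \<Lambda>) - \<i> * of_real \<theta>"
    by (simp add: algebra_simps)
  then show ?thesis by (simp only: gamma_l_def exp_add exp_diff omega_def[symmetric] amp_ratio)
qed

definition phi_left :: "real \<Rightarrow> real \<Rightarrow> real \<Rightarrow> complex" where
  "phi_left \<Lambda> \<theta> x = Lp \<Lambda> x + gamma_r \<Lambda> \<theta> * Rm \<Lambda> x"

definition phi_right :: "real \<Rightarrow> real \<Rightarrow> real \<Rightarrow> complex" where
  "phi_right \<Lambda> \<theta> x = Rp \<Lambda> x + gamma_l \<Lambda> \<theta> * Lm \<Lambda> x"

lemma phi_left_props: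
  assumes "\<Lambda> > 0"
  shows "phi_left \<Lambda> \<theta> \<in> Dalpha \<Lambda> (- exp (\<i> * of_real \<theta>)) (exp (\<i> * of_real \<theta>))"
    and "phi_left \<Lambda> \<theta> (-\<Lambda>) = amp \<Lambda> omega"
    and "dm \<Lambda> (phi_left \<Lambda> \<theta>) = - omega * amp \<Lambda> omega"
proof -
  note Lp = exp_piece_left[OF assms Re_omega, of "of_real (Nc \<Lambda>)", folded waves_as_exp_pieces amp_def]
  note Rm = exp_piece_right[OF assms Re_omega_inverse, of "of_real (Nc \<Lambda>)", folded waves_as_exp_pieces amp_def]
  have "phi_left \<Lambda> \<theta> = (\<lambda>x. 1 * Lp \<Lambda> x + gamma_r \<Lambda> \<theta> * Rm \<Lambda> x)"
    by (simp add: fun_eq_iff phi_left_def)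
  note phi = DH0star_lincomb[OF Lp(1) Rm(1), of 1 "gamma_r \<Lambda> \<theta>", folded this]
  show "phi_left \<Lambda> \<theta> (-\<Lambda>) = amp \<Lambda> omega" "dm \<Lambda> (phi_left \<Lambda> \<theta>) = - omega * amp \<Lambda> omega"
    using Lp Rm phi by (simp_all add: phi_left_def)
  have "gamma_r \<Lambda> \<theta> * amp \<Lambda> (inverse omega) = exp (\<i> * of_real \<theta>) * omega * amp \<Lambda> omega"
    using amp_nonzero by (simp add: gamma_r_eq)
  moreover have "phi_left \<Lambda> \<theta> \<Lambda> = gamma_r \<Lambda> \<theta> * amp \<Lambda> (inverse omega)"
    "dp \<Lambda> (phi_left \<Lambda> \<theta>) = gamma_r \<Lambda> \<theta> * amp \<Lambda> (inverse omega) * inverse omega"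
    using Lp Rm phi by (simp_all add: phi_left_def mult_ac)
  ultimately have "phi_left \<Lambda> \<theta> \<Lambda> = exp (\<i> * of_real \<theta>) * omega * amp \<Lambda> omega"
    "dp \<Lambda> (phi_left \<Lambda> \<theta>) = exp (\<i> * of_real \<theta>) * amp \<Lambda> omega"
    using omega_nonzero by simp_all
  then show "phi_left \<Lambda> \<theta> \<in> Dalpha \<Lambda> (- exp (\<i> * of_real \<theta>)) (exp (\<i> * of_real \<theta>))"
    using Lp phi(1,2) by (simp add: Dalpha_def phi_left_def Rm(3,5))
qed

lemma phi_right_props:
  assumes "\<Lambda> > 0"
  shows "phi_right \<Lambda> \<theta> \<in> Dalpha \<Lambda> (- exp (\<i> * of_real \<theta>)) (exp (\<i> * of_real \<theta>))"
    and "phi_right \<Lambda> \<theta> (-\<Lambda>) = omega * amp \<Lambda> omega / exp (\<i> * of_real \<theta>)"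
    and "dm \<Lambda> (phi_right \<Lambda> \<theta>) = - amp \<Lambda> omega / exp (\<i> * of_real \<theta>)"
proof -
  note Rp = exp_piece_right[OF assms Re_omega, of "of_real (Nc \<Lambda>)", folded waves_as_exp_pieces amp_def]
  note Lm = exp_piece_left[OF assms Re_omega_inverse, of "of_real (Nc \<Lambda>)", folded waves_as_exp_pieces amp_def]
  have "phi_right \<Lambda> \<theta> = (\<lambda>x. 1 * Rp \<Lambda> x + gamma_l \<Lambda> \<theta> * Lm \<Lambda> x)"
    by (simp add: fun_eq_iff phi_right_def)
  note phi = DH0star_lincomb[OF Rp(1) Lm(1), of 1 "gamma_l \<Lambda> \<theta>", folded this]
  have "gamma_l \<Lambda> \<theta> * amp \<Lambda> (inverse omega) = omega * amp \<Lambda> omega / exp (\<i> * of_real \<theta>)"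
    using amp_nonzero by (simp add: gamma_l_eq)
  moreover have "phi_right \<Lambda> \<theta> (-\<Lambda>) = gamma_l \<Lambda> \<theta> * amp \<Lambda> (inverse omega)"
    "dm \<Lambda> (phi_right \<Lambda> \<theta>) = - (gamma_l \<Lambda> \<theta> * amp \<Lambda> (inverse omega)) * inverse omega"
    using Rp Lm phi by (simp_all add: phi_right_def mult_ac)
  ultimately show "phi_right \<Lambda> \<theta> (-\<Lambda>) = omega * amp \<Lambda> omega / exp (\<i> * of_real \<theta>)"
    and "dm \<Lambda> (phi_right \<Lambda> \<theta>) = - amp \<Lambda> omega / exp (\<i> * of_real \<theta>)"
    using omega_nonzero by simp_all
  then show "phi_right \<Lambda> \<theta> \<in> Dalpha \<Lambda> (- exp (\<i> * of_real \<theta>)) (exp (\<i> * of_real \<theta>))"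
    using Rp phi(1,3) by (simp add: Dalpha_def phi_right_def Lm(3,5))
qed

text \<open>Main identity: D_gamma is the domain D_alpha with alpha_2 = -e^{i theta}, alpha_3 = e^{i theta};
  the left boundary data of the generators have determinant (amp omega)^2 (omega^2 - 1)/T, which is
  nonzero.\<close>

lemma Dgamma_eq_Dalpha:
  assumes "\<Lambda> > 0"
  shows "Dgamma \<Lambda> \<theta> = Dalpha \<Lambda> (- exp (\<i> * of_real \<theta>)) (exp (\<i> * of_real \<theta>))"
    (is "_ = Dalpha \<Lambda> (- ?T) ?T")
proof
  note L = phi_left_props[OF assms, of \<theta>] and R = phi_right_props[OF assms, of \<theta>]
  show "Dgamma \<Lambda> \<theta> \<subseteq> Dalpha \<Lambda> (- ?T) ?T"
  proof
    fix \<psi> assume "\<psi> \<in> Dgamma \<Lambda> \<theta>"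
    then obtain \<psi>0 cL cR where \<psi>0: "\<psi>0 \<in> DH0 \<Lambda>"
      and "\<psi> = (\<lambda>x. \<psi>0 x + cL * phi_left \<Lambda> \<theta> x + cR * phi_right \<Lambda> \<theta> x)"
      unfolding Dgamma_def phi_left_def phi_right_def by auto
    then have \<psi>: "\<psi> = (\<lambda>x. 1 * \<psi>0 x + 1 * (cL * phi_left \<Lambda> \<theta> x + cR * phi_right \<Lambda> \<theta> x))"
      by (simp add: add.assoc)
    have "\<psi>0 \<in> Dalpha \<Lambda> (- ?T) ?T" using \<psi>0 DH0_subset_Dalpha by blast
    moreover have "(\<lambda>x. cL * phi_left \<Lambda> \<theta> x + cR * phi_right \<Lambda> \<theta> x) \<in> Dalpha \<Lambda> (- ?T) ?T"
      using L(1) R(1) by (rule Dalpha_lincomb)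
    ultimately show "\<psi> \<in> Dalpha \<Lambda> (- ?T) ?T" unfolding \<psi> by (rule Dalpha_lincomb)
  qed
  show "Dalpha \<Lambda> (- ?T) ?T \<subseteq> Dgamma \<Lambda> \<theta>"
  proof
    fix \<psi> assume \<psi>: "\<psi> \<in> Dalpha \<Lambda> (- ?T) ?T"
    have "amp \<Lambda> omega * (- amp \<Lambda> omega / ?T) - omega * amp \<Lambda> omega / ?T * (- omega * amp \<Lambda> omega)
            = (amp \<Lambda> omega)^2 * (omega^2 - 1) / ?T"
      by (simp add: field_simps power2_eq_square)
    also have "\<dots> \<noteq> 0" using amp_nonzero[of \<Lambda> omega] omega_square_neq_one by simp
    finally have "phi_left \<Lambda> \<theta> (-\<Lambda>) * dm \<Lambda> (phi_right \<Lambda> \<theta>) - phi_right \<Lambda> \<theta> (-\<Lambda>) * dm \<Lambda> (phi_left \<Lambda> \<theta>) \<noteq> 0"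
      using L R by simp
    then obtain \<psi>0 cL cR where "\<psi>0 \<in> DH0 \<Lambda>"
      "\<psi> = (\<lambda>x. \<psi>0 x + cL * phi_left \<Lambda> \<theta> x + cR * phi_right \<Lambda> \<theta> x)"
      using Dalpha_decompose[OF \<psi> L(1) R(1)] by blast
    then show "\<psi> \<in> Dgamma \<Lambda> \<theta>"
      unfolding Dgamma_def phi_left_def phi_right_def by blast
  qed
qed

theorem theorem2:
  fixes \<Lambda> \<theta> :: real and a2 a3 :: complex
  assumes "\<Lambda> > 0" and "0 \<le> \<theta>" and "\<theta> < 2 * pi"
  shows "Dgamma \<Lambda> \<theta> = Dalpha \<Lambda> a2 a3 \<longleftrightarrow> a2 = - exp (\<i> * of_real \<theta>) \<and> a3 = exp (\<i> * of_real \<theta>)"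
proof
  let ?T = "exp (\<i> * of_real \<theta>)"
  note Dgamma = Dgamma_eq_Dalpha[OF assms(1), of \<theta>]
  note L = phi_left_props[OF assms(1), of \<theta>]
  assume "Dgamma \<Lambda> \<theta> = Dalpha \<Lambda> a2 a3"
  then have "phi_left \<Lambda> \<theta> \<in> Dalpha \<Lambda> a2 a3" using L(1) Dgamma by simp
  moreover have "dm \<Lambda> (phi_left \<Lambda> \<theta>) \<noteq> 0" "phi_left \<Lambda> \<theta> (-\<Lambda>) \<noteq> 0"
    using L(2,3) amp_nonzero omega_nonzero by simp_all
  ultimately show "a2 = - ?T \<and> a3 = ?T"
    using Dalpha_parameters_unique[OF _ L(1)] by blast
next
  assume "a2 = - exp (\<i> * of_real \<theta>) \<and> a3 = exp (\<i> * of_real \<theta>)"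
  then show "Dgamma \<Lambda> \<theta> = Dalpha \<Lambda> a2 a3" using Dgamma_eq_Dalpha[OF assms(1)] by simp
qed

end
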